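(* Assume (A1). Let $E=\mu\sigma(1-2b^2\beta)$. If $$\begin{aligned} &2b^2\beta-1<0,\\ &(2-E)(1+c+2\gamma)-\omega^2dhE>0,\\ &1-c+cE+\omega^2dhE+\gamma c-E\gamma-E\gamma c+E^2\gamma-E^2\gamma^2+E\gamma^2-\gamma>0,\\ &2\gamma+c-cE-\gamma E-\omega^2dhE<3, \end{aligned}$$ then the steady state $S^*$ of $G$ is locally asymptotically stable.
   Context: Let $g_I,g_P:\mathbb{R}\to\mathbb{R}$ be continuously differentiable functions, each satisfying: $g(0)=0$ and $g$ strictly increasing; $g$ convex on $(-\infty,0]$ and concave on $[0,+\infty)$, with maximal slope attained at $0$ and $g'(0)=1$; $g$ bounded above and below. Parameters: $A>0$, $c\in(0,1)$, $\gamma>0$, $\omega\in[0,1]$, $h>0$, $d>0$, $\sigma>0$, $\mu>0$, $F^*>0$, $b>0$, $\beta>0$. Let $G=(G_1,G_2,G_3):\mathbb{R}^3\to\mathbb{R}^3$ be defined by $G_1(Y,P,Z)=A+cY+\gamma g_I(Y-Z)+\omega hP$, $G_2(Y,P,Z)=P+\sigma g_P\big(\mu\big((1-\omega)F^*+\omega dY-P+b(2\alpha(Y,P)-1)\big)\big)$, $G_3(Y,P,Z)=Y$, where $\alpha(Y,P)=\dfrac{1}{1+e^{-4b\beta(P-(1-\omega)F^*-\omega dY)}}$, and consider the system $(Y_{t+1},P_{t+1},Z_{t+1})=G(Y_t,P_t,Z_t)$. Assumption (A1): $1-c-hd>0$. $S^*=(Y^*,P^*,Y^* )$ is the fixed point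 with $Y^*=\frac{A+\omega(1-\omega)hF^*}{1-c-\omega^2dh}$, $P^*=\frac{(1-\omega)(1-c)F^*+\omega dA}{1-c-\omega^2dh}$. *)

theory Defs
  imports "HOL-Analysis.Analysis"
begin

definition admissible_g :: "(real \<Rightarrow> real) \<Rightarrow> bool" where
  "admissible_g g \<longleftrightarrow>
     (\<exists>g'. (\<forall>x. (g has_real_derivative g' x) (at x)) \<and> continuous_on UNIV g'
        \<and> g' 0 = 1 \<and> (\<forall>x. g' x \<le> g' 0))
   \<and> g 0 = 0 \<and> strict_mono g
   \<and> convex_on {..0} g \<and> concave_on {0..} g
   \<and> bdd_above (range g) \<and> bdd_below (range g)"

definition alpha_fun :: "real \<Rightarrow> real \<Rightarrow> real \<Rightarrow> real \<Rightarrow> real \<Rightarrow> real \<Rightarrow> real \<Rightarrow> real" where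
  "alpha_fun b \<beta> \<omega> F d Y P = 1 / (1 + exp (- 4 * b * \<beta> * (P - (1 - \<omega>) * F - \<omega> * d * Y)))"

definition G_map :: "(real \<Rightarrow> real) \<Rightarrow> (real \<Rightarrow> real) \<Rightarrow> real \<Rightarrow> real \<Rightarrow> real \<Rightarrow> real \<Rightarrow> real
    \<Rightarrow> real \<Rightarrow> real \<Rightarrow> real \<Rightarrow> real \<Rightarrow> real \<Rightarrow> real
    \<Rightarrow> real \<times> real \<times> real \<Rightarrow> real \<times> real \<times> real" where
  "G_map gI gP A c \<gamma> \<omega> h d \<sigma> \<mu> F b \<beta> = (\<lambda>(Y, P, Z).
     (A + c * Y + \<gamma> * gI (Y - Z) + \<omega> * h * P,
      P + \<sigma> * gP (\<mu> * ((1 - \<omega>) * F + \<omega> * d * Y - P + b * (2 * alpha_fun b \<beta> \<omega> F d Y P - 1))),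
      Y))"

definition loc_asymp_stable :: "('a::metric_space \<Rightarrow> 'a) \<Rightarrow> 'a \<Rightarrow> bool" where
  "loc_asymp_stable f x \<longleftrightarrow>
     f x = x
   \<and> (\<forall>\<epsilon>>0. \<exists>\<delta>>0. \<forall>x0. dist x0 x < \<delta> \<longrightarrow> (\<forall>n. dist ((f ^^ n) x0) x < \<epsilon>))
   \<and> (\<exists>\<delta>>0. \<forall>x0. dist x0 x < \<delta> \<longrightarrow> (\<lambda>n. (f ^^ n) x0) \<longlonglongrightarrow> x)"

end

theory Submission
  imports Defs
begin

text \<open>
  At the steady state the sigmoid \<alpha> equals 1/2 and has slope b\<beta>, so the Jacobian of G there
  depends on the price dynamics only through E = \<mu>\<sigma>(1 - 2b^2\<beta>). The hypotheses, together
  with E > 0 and (A1), are Farebrother's conditions for its characteristic polynomial to be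
  Schur stable: a real root r \<in> (-1, 1) splits off by the intermediate value theorem, and the
  remaining quadratic has both roots in the unit disc. Hence every orbit of the Jacobian tends
  to 0, some power of it contracts by 1/2, and by differentiability the same power of G
  contracts a neighbourhood of S*; this gives both Lyapunov stability and attractivity.
\<close>

text \<open>Farebrother's (1973) conditions for all roots of x^3 + a1 x^2 + a2 x + a3 to lie in the
  open unit disc.\<close>
definition farebrother :: "real \<Rightarrow> real \<Rightarrow> real \<Rightarrow> bool" where
  "farebrother a1 a2 a3 \<longleftrightarrow>
     1 + a1 + a2 + a3 > 0 \<and> 1 - a1 + a2 - a3 > 0 \<and> 1 - a2 + a1 * a3 - a3^2 > 0 \<and> a2 < 3"

lemma first_order_recurrence_tendsto_zero:
  fixes X R :: "nat \<Rightarrow> 'a::real_normed_div_algebra" and \<rho> :: 'a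
  assumes rec: "\<And>n. X (Suc n) = \<rho> * X n + R n" and \<rho>: "norm \<rho> < 1" and R: "R \<longlonglongrightarrow> 0"
  shows "X \<longlonglongrightarrow> 0"
proof (rule LIMSEQ_I)
  fix e :: real assume e: "e > 0"
  define q where "q = norm \<rho>"
  have q: "0 \<le> q" "q < 1" using \<rho> by (auto simp: q_def)
  obtain N where N: "\<And>n. n \<ge> N \<Longrightarrow> norm (R n) < e * (1 - q) / 2"
    using LIMSEQ_D[OF R, of "e * (1 - q) / 2"] e q by auto
  have bound: "norm (X (N + k)) \<le> q ^ k * norm (X N) + e / 2" for k
  proof (induction k)
    case 0 then show ?case using e by simp
  next
    case (Suc k)
    have "norm (X (N + Suc k)) \<le> q * norm (X (N + k)) + norm (R (N + k))"
      using rec[of "N + k"] by (simp add: q_def norm_mult norm_triangle_le)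
    also have "\<dots> \<le> q * (q ^ k * norm (X N) + e / 2) + e * (1 - q) / 2"
      using Suc q N[of "N + k"] by (intro add_mono mult_left_mono) auto
    also have "\<dots> = q ^ Suc k * norm (X N) + e / 2" by (simp add: field_simps)
    finally show ?case .
  qed
  have "(\<lambda>k. q ^ k * norm (X N)) \<longlonglongrightarrow> 0"
    using q by (intro tendsto_mult_left_zero LIMSEQ_power_zero) auto
  then obtain K where K: "\<And>k. k \<ge> K \<Longrightarrow> q ^ k * norm (X N) < e / 2"
    using LIMSEQ_D[of _ 0 "e / 2"] e by fastforce
  have "norm (X n) < e" if "n \<ge> N + K" for n
  proof -
    have "q ^ (n - N) * norm (X N) < e / 2" using K that by simp
    then show ?thesis using bound[of "n - N"] that by simp
  qed
  then show "\<exists>n0. \<forall>n\<ge>n0. norm (X n - 0) < e" by auto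
qed

lemma factored_cubic_recurrence_tendsto_zero:
  fixes U :: "nat \<Rightarrow> 'a::real_normed_field" and \<rho>1 \<rho>2 \<rho>3 :: 'a
  assumes rec: "\<And>n. U (n+3) - (\<rho>1 + \<rho>2 + \<rho>3) * U (n+2) + (\<rho>1*\<rho>2 + \<rho>1*\<rho>3 + \<rho>2*\<rho>3) * U (n+1)
                     - \<rho>1*\<rho>2*\<rho>3 * U n = 0"
    and "norm \<rho>1 < 1" "norm \<rho>2 < 1" "norm \<rho>3 < 1"
  shows "U \<longlonglongrightarrow> 0"
proof -
  define V where "V n = U (Suc n) - \<rho>1 * U n" for n
  define W where "W n = V (Suc n) - \<rho>2 * V n" for n
  have "W (Suc n) - \<rho>3 * W n = 0" for n
    using rec[of n] by (simp add: W_def V_def algebra_simps numeral_3_eq_3)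
  then have "W \<longlonglongrightarrow> 0"
    using assms(4) by (intro first_order_recurrence_tendsto_zero[of W \<rho>3 "\<lambda>_. 0"]) auto
  then have "V \<longlonglongrightarrow> 0"
    using assms(3) by (intro first_order_recurrence_tendsto_zero[of V \<rho>2 W]) (auto simp: W_def)
  then show ?thesis
    using assms(2) by (intro first_order_recurrence_tendsto_zero[of U \<rho>1 V]) (auto simp: V_def)
qed

lemma quadratic_roots_in_unit_disc:
  fixes z :: complex and s t :: real
  assumes t: "\<bar>t\<bar> < 1" and s: "\<bar>s\<bar> < 1 + t" and z: "z^2 + s * z + t = 0"
  shows "norm z < 1"
proof -
  obtain x y where xy: "z = Complex x y" by (cases z)
  from z have re: "x^2 - y^2 + s * x + t = 0" and im: "y * (2 * x + s) = 0"
    by (auto simp: xy complex_eq_iff power2_eq_square algebra_simps)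
  show ?thesis
  proof (cases "y = 0")
    case True
    have "x < 1"
    proof (rule ccontr)
      assume "\<not> x < 1"
      then have "(x - 1) * (x + 1 + s) \<ge> 0" using s t by (intro mult_nonneg_nonneg) auto
      moreover have "x^2 + s * x + t = (x - 1) * (x + 1 + s) + (1 + s + t)"
        by (simp add: algebra_simps power2_eq_square)
      ultimately show False using re True s by simp
    qed
    moreover have "x > -1"
    proof (rule ccontr)
      assume "\<not> x > -1"
      then have "(x + 1) * (x - 1 + s) \<ge> 0" using s t by (intro mult_nonpos_nonpos) auto
      moreover have "x^2 + s * x + t = (x + 1) * (x - 1 + s) + (1 - s + t)"
        by (simp add: algebra_simps power2_eq_square)
      ultimately show False using re True s by simp
    qed
    ultimately have "\<bar>x\<bar> < 1" by simp
    then show ?thesis using True xy by (simp add: norm_complex_def)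
  next
    case False
    then have "2 * x + s = 0" using im by simp
    moreover have "x^2 + y^2 = t + x * (2 * x + s)" using re by (simp add: algebra_simps power2_eq_square)
    ultimately have "sqrt (x^2 + y^2) < 1" using t by simp
    then show ?thesis using xy by (simp add: norm_complex_def)
  qed
qed

lemma cubic_root_in_unit_interval:
  fixes a1 a2 a3 :: real
  assumes "1 + a1 + a2 + a3 > 0" and "1 - a1 + a2 - a3 > 0"
  obtains r where "\<bar>r\<bar> < 1" and "r^3 + a1 * r^2 + a2 * r + a3 = 0"
proof -
  define p where "p x = x^3 + a1 * x^2 + a2 * x + a3" for x :: real
  have "continuous_on {-1..1} p" unfolding p_def by (intro continuous_intros)
  moreover have "p (-1) < 0" "0 < p 1" using assms by (simp_all add: p_def)
  ultimately obtain r where "-1 \<le> r" "r \<le> 1" "p r = 0"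
    using IVT'[of p "-1" 0 1] by fastforce
  moreover from this have "r \<noteq> 1" "r \<noteq> -1" using \<open>p (-1) < 0\<close> \<open>0 < p 1\<close> by auto
  ultimately show ?thesis using that[of r] by (simp add: p_def abs_less_iff)
qed

lemma quadratic_factor_constant_lt_one:
  fixes r s t :: real
  assumes r: "\<bar>r\<bar> < 1" and s: "\<bar>s\<bar> < 1 + t"
    and pos: "(1 - t) * (1 + r * s + r^2 * t) > 0" and "t - r * s < 3"
  shows "t < 1"
proof (rule ccontr)
  assume "\<not> t < 1"
  with pos have "t > 1" by (cases "t = 1") auto
  with pos have neg: "1 + r * s + r^2 * t < 0" by (simp add: zero_less_mult_iff)
  have "\<bar>r * s\<bar> \<le> \<bar>r\<bar> * (1 + t)" using s by (simp add: abs_mult mult_left_mono)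
  then have "(1 - \<bar>r\<bar>) * (1 - \<bar>r\<bar> * t) < 0" using neg by (simp add: algebra_simps power2_eq_square)
  then have "\<bar>r\<bar> * t > 1" using r by (auto simp: mult_less_0_iff)
  moreover have "t * (1 + r^2) < 2" using neg \<open>t - r * s < 3\<close> by (simp add: algebra_simps)
  moreover have "2 * \<bar>r\<bar> \<le> 1 + r^2"
    using zero_le_power2[of "\<bar>r\<bar> - 1"] by (simp add: power2_eq_square algebra_simps)
  then have "t * (2 * \<bar>r\<bar>) \<le> t * (1 + r^2)" using \<open>t > 1\<close> by (intro mult_left_mono) auto
  ultimately show False by (simp add: algebra_simps)
qed

lemma farebrother_factorization:
  assumes "farebrother a1 a2 a3"
  obtains r s t :: real where "\<bar>r\<bar> < 1" "\<bar>t\<bar> < 1" "\<bar>s\<bar> < 1 + t"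
    and "a1 = s - r" "a2 = t - r * s" "a3 = - r * t"
proof -
  have p1: "1 + a1 + a2 + a3 > 0" and m1: "1 - a1 + a2 - a3 > 0"
    and f3: "1 - a2 + a1 * a3 - a3^2 > 0" and f4: "a2 < 3"
    using assms by (auto simp: farebrother_def)
  obtain r where r: "\<bar>r\<bar> < 1" and root: "r^3 + a1 * r^2 + a2 * r + a3 = 0"
    using cubic_root_in_unit_interval[OF p1 m1] .
  define s where "s = a1 + r"
  define t where "t = a2 + r * s"
  have a: "a1 = s - r" "a2 = t - r * s" "a3 = - r * t"
    using root by (simp_all add: s_def t_def power2_eq_square power3_eq_cube algebra_simps)
  have "(1 - r) * (1 + s + t) > 0" "(1 + r) * (1 - s + t) > 0"
    using p1 m1 by (simp_all add: a algebra_simps)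
  then have "1 + s + t > 0" "1 - s + t > 0" using r by (simp_all add: zero_less_mult_iff abs_less_iff)
  then have s: "\<bar>s\<bar> < 1 + t" by linarith
  have "(1 - t) * (1 + r * s + r^2 * t) > 0"
    using f3 by (simp add: a algebra_simps power2_eq_square)
  then have "t < 1" using quadratic_factor_constant_lt_one[OF r s] f4 a(2) by simp
  with s have "\<bar>t\<bar> < 1" by linarith
  with r s a show ?thesis using that by blast
qed

lemma complex_quadratic_roots_exist:
  fixes s t :: complex
  obtains z1 z2 where "z1 + z2 = - s" and "z1 * z2 = t"
proof
  define z1 where "z1 = (- s + csqrt (s^2 - 4 * t)) / 2"
  show "z1 + (- s - z1) = - s" by simp
  have "z1 * (- s - z1) = (s^2 - csqrt (s^2 - 4 * t) ^ 2) / 4"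
    by (simp add: z1_def field_simps power2_eq_square)
  then show "z1 * (- s - z1) = t" by (simp add: power2_csqrt)
qed

lemma farebrother_recurrence_tendsto_zero:
  fixes u :: "nat \<Rightarrow> real"
  assumes "farebrother a1 a2 a3"
    and rec: "\<And>n. u (n+3) + a1 * u (n+2) + a2 * u (n+1) + a3 * u n = 0"
  shows "u \<longlonglongrightarrow> 0"
proof -
  obtain r s t where r: "\<bar>r\<bar> < 1" and t: "\<bar>t\<bar> < 1" and s: "\<bar>s\<bar> < 1 + t"
    and a: "a1 = s - r" "a2 = t - r * s" "a3 = - r * t"
    using farebrother_factorization[OF assms(1)] .
  obtain z1 z2 :: complex where sum: "z1 + z2 = - of_real s" and prod: "z1 * z2 = of_real t"
    by (rule complex_quadratic_roots_exist)
  have s_eq: "complex_of_real s = - (z1 + z2)" using sum by simp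
  have "z^2 + s * z + t = 0" if "z = z1 \<or> z = z2" for z :: complex
    using that by (auto simp: s_eq simp flip: prod simp: algebra_simps power2_eq_square)
  then have "norm z1 < 1" "norm z2 < 1" using quadratic_roots_in_unit_disc[OF t s] by auto
  moreover have "norm (complex_of_real r) < 1" using r by simp
  moreover have "of_real (u (n+3)) - (of_real r + z1 + z2) * of_real (u (n+2))
      + (of_real r * z1 + of_real r * z2 + z1 * z2) * of_real (u (n+1))
      - of_real r * z1 * z2 * of_real (u n) = (0 :: complex)" for n
  proof -
    have "of_real r + z1 + z2 = - complex_of_real a1"
      "of_real r * z1 + of_real r * z2 + z1 * z2 = complex_of_real a2"
      "of_real r * z1 * z2 = - complex_of_real a3"
      by (simp_all add: a add.assoc sum mult.assoc prod flip: distrib_left)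
    then show ?thesis using arg_cong[OF rec[of n], of complex_of_real] by simp
  qed
  ultimately have "(\<lambda>n. complex_of_real (u n)) \<longlonglongrightarrow> of_real 0"
    using factored_cubic_recurrence_tendsto_zero by fastforce
  then show ?thesis by (simp only: tendsto_of_real_iff)
qed

lemma farebrother_vector_recurrence_tendsto_zero:
  fixes w :: "nat \<Rightarrow> 'a::euclidean_space"
  assumes "farebrother a1 a2 a3"
    and rec: "\<And>n. w (n+3) + a1 *\<^sub>R w (n+2) + a2 *\<^sub>R w (n+1) + a3 *\<^sub>R w n = 0"
  shows "w \<longlonglongrightarrow> 0"
  unfolding tendsto_componentwise_iff[of w]
proof
  fix i :: 'a
  have "w (n+3) \<bullet> i + a1 * (w (n+2) \<bullet> i) + a2 * (w (n+1) \<bullet> i) + a3 * (w n \<bullet> i) = 0" for n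
    using arg_cong[OF rec[of n], of "\<lambda>v. v \<bullet> i"] by (simp add: inner_add_left)
  then show "(\<lambda>n. w n \<bullet> i) \<longlonglongrightarrow> 0 \<bullet> i"
    using farebrother_recurrence_tendsto_zero[OF assms(1)] by simp
qed

lemma linear_funpow:
  fixes L :: "'a::real_vector \<Rightarrow> 'a"
  shows "linear L \<Longrightarrow> linear (L ^^ n)"
  by (induction n) (simp_all add: linear_compose id_def linear_iff)

lemma linear_iterates_eventually_contract:
  fixes L :: "'a::euclidean_space \<Rightarrow> 'a"
  assumes lin: "linear L" and orbits: "\<And>v. (\<lambda>n. (L ^^ n) v) \<longlonglongrightarrow> 0"
  obtains N where "N > 0" and "\<And>v. norm ((L ^^ N) v) \<le> norm v / 2"
proof -
  define \<epsilon> where "\<epsilon> = 1 / (2 * DIM('a))"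
  have "\<forall>\<^sub>F n in sequentially. \<forall>b\<in>Basis. norm ((L ^^ n) b) < \<epsilon>"
    using orbits by (intro eventually_ball_finite ballI tendsto_norm_zero_iff[THEN iffD2, THEN order_tendstoD(2)])
      (auto simp: \<epsilon>_def)
  then obtain N0 where N0: "\<And>b. b \<in> Basis \<Longrightarrow> norm ((L ^^ Suc N0) b) < \<epsilon>"
    unfolding eventually_sequentially by (meson le_SucI order_refl)
  have "norm ((L ^^ Suc N0) v) \<le> norm v / 2" for v
  proof -
    have "(L ^^ Suc N0) v = (\<Sum>b\<in>Basis. (v \<bullet> b) *\<^sub>R (L ^^ Suc N0) b)"
      using linear_sum[OF linear_funpow[OF lin]] linear_scale[OF linear_funpow[OF lin]]
      by (metis (no_types, lifting) euclidean_representation sum.cong)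
    also have "norm \<dots> \<le> (\<Sum>b\<in>Basis. \<bar>v \<bullet> b\<bar> * norm ((L ^^ Suc N0) b))"
      by (rule order_trans[OF norm_sum]) simp
    also have "\<dots> \<le> (\<Sum>b\<in>(Basis :: 'a set). norm v * \<epsilon>)"
      by (rule sum_mono, rule mult_mono) (use N0 Basis_le_norm in \<open>auto intro: less_imp_le\<close>)
    also have "\<dots> = norm v / 2" by (simp add: \<epsilon>_def)
    finally show ?thesis .
  qed
  then show ?thesis using that[of "Suc N0"] by blast
qed

lemma funpow_fixpoint: "f x = x \<Longrightarrow> (f ^^ n) x = x"
  by (induction n) simp_all

lemma funpow_has_derivative_at_fixpoint:
  assumes fx: "f x = x" and D: "(f has_derivative L) (at x)"
  shows "((f ^^ n) has_derivative (L ^^ n)) (at x)"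
proof (induction n)
  case 0 then show ?case by (simp add: id_def has_derivative_ident)
next
  case (Suc n)
  show ?case using has_derivative_compose[OF Suc] D funpow_fixpoint[of f x, OF fx] by simp
qed

lemma local_contraction_from_derivative:
  fixes g :: "'a::real_normed_vector \<Rightarrow> 'a"
  assumes gx: "g x = x" and D: "(g has_derivative K) (at x)" and K: "\<And>v. norm (K v) \<le> norm v / 2"
  obtains \<delta> where "\<delta> > 0" and "\<And>y. norm (y - x) < \<delta> \<Longrightarrow> norm (g y - x) \<le> 3/4 * norm (y - x)"
proof -
  obtain \<delta> where "\<delta> > 0"
    and remainder: "\<And>y. norm (y - x) < \<delta> \<Longrightarrow> norm (g y - x - K (y - x)) \<le> 1/4 * norm (y - x)"
    using D gx unfolding has_derivative_at_alt by (metis divide_pos_pos zero_less_numeral zero_less_one)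
  moreover have "norm (g y - x) \<le> 3/4 * norm (y - x)" if "norm (y - x) < \<delta>" for y
    using norm_triangle_sub[of "g y - x" "K (y - x)"] remainder[OF that] K[of "y - x"] by simp
  ultimately show ?thesis using that by blast
qed

lemma funpow_local_contraction:
  assumes contr: "\<And>y. norm (y - x) < \<delta> \<Longrightarrow> norm (g y - x) \<le> q * norm (y - x)"
    and q: "0 \<le> q" "q \<le> 1" and y: "norm (y - x) < \<delta>"
  shows "norm ((g ^^ m) y - x) \<le> q ^ m * norm (y - x)"
proof (induction m)
  case 0 then show ?case by simp
next
  case (Suc m)
  have "q ^ m * norm (y - x) \<le> norm (y - x)" using q by (simp add: mult_left_le_one_le power_le_one)
  then have "norm ((g ^^ m) y - x) < \<delta>" using Suc y by linarith
  then have "norm ((g ^^ Suc m) y - x) \<le> q * norm ((g ^^ m) y - x)" using contr by simp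
  also have "\<dots> \<le> q * (q ^ m * norm (y - x))" using Suc q by (simp add: mult_left_mono)
  finally show ?case by simp
qed

lemma finitely_many_iterates_near_fixpoint:
  fixes f :: "'a::real_normed_vector \<Rightarrow> 'a"
  assumes fx: "f x = x" and cont: "\<And>k. isCont (f ^^ k) x" and "e > 0"
  obtains \<eta> where "\<eta> > 0" and "\<And>y k. norm (y - x) < \<eta> \<Longrightarrow> k < N \<Longrightarrow> norm ((f ^^ k) y - x) < e"
proof -
  have "((f ^^ k) \<longlongrightarrow> x) (nhds x)" for k
    using cont[of k] funpow_fixpoint[of f x k, OF fx] by (simp add: tendsto_nhds_iff isCont_def)
  then have "\<forall>\<^sub>F y in nhds x. \<forall>k\<in>{..<N}. dist ((f ^^ k) y) x < e"
    using \<open>e > 0\<close> by (intro eventually_ball_finite ballI tendstoD) auto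
  then show ?thesis using that by (auto simp: eventually_nhds_metric dist_norm)
qed

lemma iterates_stay_near_contracting_fixpoint:
  fixes f :: "'a::real_normed_vector \<Rightarrow> 'a"
  assumes fx: "f x = x" and cont: "\<And>k. isCont (f ^^ k) x" and "N > 0" and "\<delta> > 0"
    and contr: "\<And>y. norm (y - x) < \<delta> \<Longrightarrow> norm ((f ^^ N) y - x) \<le> 3/4 * norm (y - x)"
    and "e > 0"
  shows "\<exists>\<eta>>0. \<forall>y. norm (y - x) < \<eta> \<longrightarrow> (\<forall>n. norm ((f ^^ n) y - x) < e)"
proof -
  obtain \<eta> where "\<eta> > 0" and near: "\<And>y k. norm (y - x) < \<eta> \<Longrightarrow> k < N \<Longrightarrow> norm ((f ^^ k) y - x) < e"
    using finitely_many_iterates_near_fixpoint[OF fx cont \<open>e > 0\<close>] by blast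
  have "norm ((f ^^ n) y - x) < e" if y: "norm (y - x) < min \<eta> \<delta>" for y n
  proof -
    have "norm (((f ^^ N) ^^ (n div N)) y - x) \<le> (3/4) ^ (n div N) * norm (y - x)"
      using funpow_local_contraction[OF contr] y by simp
    also have "\<dots> \<le> norm (y - x)" by (simp add: mult_left_le_one_le power_le_one)
    finally have "norm ((f ^^ (N * (n div N))) y - x) < \<eta>" using y by (simp add: funpow_mult)
    then have "norm ((f ^^ (n mod N)) ((f ^^ (N * (n div N))) y) - x) < e"
      using near \<open>N > 0\<close> by simp
    moreover have "f ^^ n = f ^^ (n mod N) \<circ> f ^^ (N * (n div N))"
      by (simp flip: funpow_add)
    ultimately show ?thesis by simp
  qed
  then show ?thesis using \<open>\<eta> > 0\<close> \<open>\<delta> > 0\<close> by (intro exI[of _ "min \<eta> \<delta>"]) simp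
qed

lemma loc_asymp_stable_if_iterate_contracts:
  fixes f :: "'a::real_normed_vector \<Rightarrow> 'a"
  assumes fx: "f x = x" and cont: "\<And>k. isCont (f ^^ k) x" and "N > 0" and "\<delta> > 0"
    and contr: "\<And>y. norm (y - x) < \<delta> \<Longrightarrow> norm ((f ^^ N) y - x) \<le> 3/4 * norm (y - x)"
  shows "loc_asymp_stable f x"
proof -
  have stay: "\<exists>\<eta>>0. \<forall>y. norm (y - x) < \<eta> \<longrightarrow> (\<forall>n. norm ((f ^^ n) y - x) < e)" if "e > 0" for e
    using iterates_stay_near_contracting_fixpoint[of f x N \<delta> e] assms that by blast
  have "(\<lambda>n. (f ^^ n) y) \<longlonglongrightarrow> x" if y: "norm (y - x) < \<delta>" for y
  proof (rule LIMSEQ_I)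
    fix e :: real assume "e > 0"
    then obtain \<eta> where "\<eta> > 0" and near: "\<And>z n. norm (z - x) < \<eta> \<Longrightarrow> norm ((f ^^ n) z - x) < e"
      using stay by blast
    have "(\<lambda>m. (3/4::real) ^ m * norm (y - x)) \<longlonglongrightarrow> 0"
      by (intro tendsto_mult_left_zero LIMSEQ_power_zero) auto
    then obtain m where "(3/4) ^ m * norm (y - x) < \<eta>"
      using LIMSEQ_D[of _ 0 \<eta>] \<open>\<eta> > 0\<close> by fastforce
    then have "norm ((f ^^ (N * m)) y - x) < \<eta>"
      using funpow_local_contraction[OF contr _ _ y, of m] by (simp add: funpow_mult)
    then have "norm ((f ^^ (n - N * m)) ((f ^^ (N * m)) y) - x) < e" for n
      by (rule near)
    moreover have "f ^^ n = f ^^ (n - N * m) \<circ> f ^^ (N * m)" if "n \<ge> N * m" for n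
      using that by (simp flip: funpow_add)
    ultimately have "norm ((f ^^ n) y - x) < e" if "n \<ge> N * m" for n
      using that by (metis comp_apply)
    then show "\<exists>n0. \<forall>n\<ge>n0. norm ((f ^^ n) y - x) < e" by blast
  qed
  then show ?thesis
    unfolding loc_asymp_stable_def dist_norm using fx stay \<open>\<delta> > 0\<close> by blast
qed

lemma loc_asymp_stable_if_linearization_contracts:
  fixes f :: "'a::real_normed_vector \<Rightarrow> 'a"
  assumes fx: "f x = x" and D: "(f has_derivative L) (at x)" and "N > 0"
    and LN: "\<And>v. norm ((L ^^ N) v) \<le> norm v / 2"
  shows "loc_asymp_stable f x"
proof -
  have cont: "isCont (f ^^ k) x" for k
    using funpow_has_derivative_at_fixpoint[OF fx D] has_derivative_continuous by blast
  obtain \<delta> where "\<delta> > 0"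
    and contr: "\<And>y. norm (y - x) < \<delta> \<Longrightarrow> norm ((f ^^ N) y - x) \<le> 3/4 * norm (y - x)"
    using local_contraction_from_derivative[OF funpow_fixpoint[of f x, OF fx]
        funpow_has_derivative_at_fixpoint[OF fx D] LN] by blast
  show ?thesis
    by (rule loc_asymp_stable_if_iterate_contracts[where N = N and \<delta> = \<delta>])
      (use fx cont \<open>N > 0\<close> \<open>\<delta> > 0\<close> contr in auto)
qed

lemma has_derivative_compose_real:
  fixes k :: "'a::real_normed_vector \<Rightarrow> real"
  assumes "(k has_derivative k') (at x)" and "(g has_real_derivative D) (at (k x))"
  shows "((\<lambda>x. g (k x)) has_derivative (\<lambda>v. D * k' v)) (at x)"
  using has_derivative_compose[of k k' x UNIV g "(*) D"] assms by (simp add: has_field_derivative_def)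

lemma alpha_fun_has_derivative:
  fixes Y0 P0 Z0 :: real
  assumes "P0 = (1 - \<omega>) * F + \<omega> * d * Y0"
  shows "((\<lambda>x. alpha_fun b \<beta> \<omega> F d (fst x) (fst (snd x))) has_derivative
           (\<lambda>v. b * \<beta> * (fst (snd v) - \<omega> * d * fst v))) (at (Y0, P0, Z0))"
proof -
  define m where "m x = fst (snd x) - (1 - \<omega>) * F - \<omega> * d * fst x" for x :: "real \<times> real \<times> real"
  have "(m has_derivative (\<lambda>v. fst (snd v) - \<omega> * d * fst v)) (at (Y0, P0, Z0))"
    unfolding m_def by (rule derivative_eq_intros refl | simp)+
  moreover have "m (Y0, P0, Z0) = 0" using assms by (simp add: m_def)
  moreover have "((\<lambda>t. 1 / (1 + exp (- 4 * b * \<beta> * t))) has_real_derivative b * \<beta>) (at 0)"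
    by (rule derivative_eq_intros refl | simp)+
  ultimately show ?thesis
    using has_derivative_compose_real by (fastforce simp: alpha_fun_def m_def)
qed

definition G_jacobian :: "real \<Rightarrow> real \<Rightarrow> real \<Rightarrow> real \<Rightarrow> real \<Rightarrow> real
    \<Rightarrow> real \<times> real \<times> real \<Rightarrow> real \<times> real \<times> real" where
  "G_jacobian c \<gamma> \<omega> h d E = (\<lambda>(y, p, z).
     ((c + \<gamma>) * y + \<omega> * h * p - \<gamma> * z, \<omega> * d * E * y + (1 - E) * p, y))"

lemma G_map_has_derivative:
  assumes gI: "\<And>x. (gI has_real_derivative gI' x) (at x)" "gI' 0 = 1"
    and gP: "\<And>x. (gP has_real_derivative gP' x) (at x)" "gP' 0 = 1"
    and steady: "P0 = (1 - \<omega>) * F + \<omega> * d * Y0"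
  shows "(G_map gI gP A c \<gamma> \<omega> h d \<sigma> \<mu> F b \<beta> has_derivative
          G_jacobian c \<gamma> \<omega> h d (\<mu> * \<sigma> * (1 - 2 * b^2 * \<beta>))) (at (Y0, P0, Y0))"
proof -
  define x0 where "x0 = (Y0, P0, Y0)"
  define u where "u x = \<mu> * ((1 - \<omega>) * F + \<omega> * d * fst x - fst (snd x)
      + b * (2 * alpha_fun b \<beta> \<omega> F d (fst x) (fst (snd x)) - 1))" for x :: "real \<times> real \<times> real"
  have "(u has_derivative (\<lambda>v. \<mu> * (\<omega> * d * fst v - fst (snd v)
      + b * (2 * (b * \<beta> * (fst (snd v) - \<omega> * d * fst v)))))) (at x0)"
    unfolding u_def x0_def
    by (rule derivative_eq_intros refl alpha_fun_has_derivative[OF steady] | simp)+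
  moreover have "u x0 = 0"
    using steady by (simp add: u_def x0_def alpha_fun_def)
  moreover have "(gP has_real_derivative 1) (at 0)" using gP by metis
  ultimately have dP: "((\<lambda>x. gP (u x)) has_derivative (\<lambda>v. \<mu> * (\<omega> * d * fst v - fst (snd v)
      + b * (2 * (b * \<beta> * (fst (snd v) - \<omega> * d * fst v)))))) (at x0)"
    using has_derivative_compose_real[of u _ x0 gP 1] by simp
  have "((\<lambda>x. fst x - snd (snd x)) has_derivative (\<lambda>v. fst v - snd (snd v))) (at x0)"
    by (rule derivative_eq_intros refl | simp)+
  moreover have "(gI has_real_derivative 1) (at 0)" using gI by metis
  ultimately have dI: "((\<lambda>x. gI (fst x - snd (snd x))) has_derivative (\<lambda>v. fst v - snd (snd v))) (at x0)"
    using has_derivative_compose_real[of "\<lambda>x. fst x - snd (snd x)" _ x0 gI 1] by (simp add: x0_def)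
  have G: "G_map gI gP A c \<gamma> \<omega> h d \<sigma> \<mu> F b \<beta> = (\<lambda>x.
      (A + c * fst x + \<gamma> * gI (fst x - snd (snd x)) + \<omega> * h * fst (snd x), fst (snd x) + \<sigma> * gP (u x), fst x))"
    by (auto simp: G_map_def u_def fun_eq_iff)
  show ?thesis
    unfolding x0_def[symmetric] G
    by (rule has_derivative_eq_rhs, (rule derivative_eq_intros refl dI dP | simp)+)
      (auto simp: G_jacobian_def fun_eq_iff algebra_simps power2_eq_square)
qed

lemma G_map_fixed_point:
  assumes "gI 0 = 0" and "gP 0 = 0"
    and "P0 = (1 - \<omega>) * F + \<omega> * d * Y0" and "Y0 = A + c * Y0 + \<omega> * h * P0"
  shows "G_map gI gP A c \<gamma> \<omega> h d \<sigma> \<mu> F b \<beta> (Y0, P0, Y0) = (Y0, P0, Y0)"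
  using assms by (simp add: G_map_def alpha_fun_def)

lemma G_jacobian_characteristic:
  fixes c \<gamma> \<omega> h d E :: real
  defines "J \<equiv> G_jacobian c \<gamma> \<omega> h d E"
  shows "J (J (J v)) - (c + \<gamma> + 1 - E) *\<^sub>R J (J v)
      + ((c + \<gamma>) * (1 - E) - \<omega>^2 * d * h * E + \<gamma>) *\<^sub>R J v - (\<gamma> * (1 - E)) *\<^sub>R v = 0"
  unfolding J_def by (cases v) (simp add: G_jacobian_def algebra_simps power2_eq_square)

lemma G_jacobian_orbits_tendsto_zero:
  assumes "E > 0" and "1 - c - \<omega>^2 * d * h > 0"
    and "(2 - E) * (1 + c + 2 * \<gamma>) - \<omega>^2 * d * h * E > 0"
    and "1 - c + c * E + \<omega>^2 * d * h * E + \<gamma> * c - E * \<gamma> - E * \<gamma> * c + E^2 * \<gamma>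
           - E^2 * \<gamma>^2 + E * \<gamma>^2 - \<gamma> > 0"
    and "2 * \<gamma> + c - c * E - \<gamma> * E - \<omega>^2 * d * h * E < 3"
  shows "(\<lambda>n. (G_jacobian c \<gamma> \<omega> h d E ^^ n) v) \<longlonglongrightarrow> 0"
proof (rule farebrother_vector_recurrence_tendsto_zero)
  show "farebrother (- (c + \<gamma> + 1 - E)) ((c + \<gamma>) * (1 - E) - \<omega>^2 * d * h * E + \<gamma>) (- \<gamma> * (1 - E))"
    using assms mult_pos_pos[OF assms(1,2)]
    by (simp add: farebrother_def algebra_simps power2_eq_square)
  let ?J = "G_jacobian c \<gamma> \<omega> h d E"
  show "(?J ^^ (n + 3)) v + (- (c + \<gamma> + 1 - E)) *\<^sub>R (?J ^^ (n + 2)) v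
      + ((c + \<gamma>) * (1 - E) - \<omega>^2 * d * h * E + \<gamma>) *\<^sub>R (?J ^^ (n + 1)) v
      + (- \<gamma> * (1 - E)) *\<^sub>R (?J ^^ n) v = 0" for n
    using G_jacobian_characteristic[of c \<gamma> \<omega> h d E "(?J ^^ n) v"]
    by (simp add: numeral_3_eq_3 algebra_simps)
qed

theorem proposition4:
  fixes gI gP :: "real \<Rightarrow> real"
    and A c \<gamma> \<omega> h d \<sigma> \<mu> F b \<beta> :: real
  assumes "admissible_g gI" and "admissible_g gP"
    and "A > 0" and "0 < c" and "c < 1" and "\<gamma> > 0" and "0 \<le> \<omega>" and "\<omega> \<le> 1"
    and "h > 0" and "d > 0" and "\<sigma> > 0" and "\<mu> > 0" and "F > 0" and "b > 0" and "\<beta> > 0"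
    and A1: "1 - c - h * d > 0"
    and c1: "2 * b^2 * \<beta> - 1 < 0"
    and c2: "let E = \<mu> * \<sigma> * (1 - 2 * b^2 * \<beta>) in
               (2 - E) * (1 + c + 2 * \<gamma>) - \<omega>^2 * d * h * E > 0"
    and c3: "let E = \<mu> * \<sigma> * (1 - 2 * b^2 * \<beta>) in
               1 - c + c * E + \<omega>^2 * d * h * E + \<gamma> * c - E * \<gamma> - E * \<gamma> * c + E^2 * \<gamma>
               - E^2 * \<gamma>^2 + E * \<gamma>^2 - \<gamma> > 0"
    and c4: "let E = \<mu> * \<sigma> * (1 - 2 * b^2 * \<beta>) in
               2 * \<gamma> + c - c * E - \<gamma> * E - \<omega>^2 * d * h * E < 3"
  shows "let Ystar = (A + \<omega> * (1 - \<omega>) * h * F) / (1 - c - \<omega>^2 * d * h);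
             Pstar = ((1 - \<omega>) * (1 - c) * F + \<omega> * d * A) / (1 - c - \<omega>^2 * d * h)
         in loc_asymp_stable (G_map gI gP A c \<gamma> \<omega> h d \<sigma> \<mu> F b \<beta>) (Ystar, Pstar, Ystar)"
proof -
  obtain gI' where gI: "\<And>x. (gI has_real_derivative gI' x) (at x)" "gI' 0 = 1" and "gI 0 = 0"
    using assms(1) unfolding admissible_g_def by blast
  obtain gP' where gP: "\<And>x. (gP has_real_derivative gP' x) (at x)" "gP' 0 = 1" and "gP 0 = 0"
    using assms(2) unfolding admissible_g_def by blast
  define E where "E = \<mu> * \<sigma> * (1 - 2 * b^2 * \<beta>)"
  define Ys where "Ys = (A + \<omega> * (1 - \<omega>) * h * F) / (1 - c - \<omega>^2 * d * h)"
  define Ps where "Ps = ((1 - \<omega>) * (1 - c) * F + \<omega> * d * A) / (1 - c - \<omega>^2 * d * h)"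
  have "\<omega>^2 * (d * h) \<le> d * h"
    using assms(7-10) by (simp add: mult_left_le_one_le power_le_one)
  then have D: "1 - c - \<omega>^2 * d * h > 0" using A1 by (simp add: algebra_simps)
  have P_steady: "Ps = (1 - \<omega>) * F + \<omega> * d * Ys"
    using D by (simp add: Ys_def Ps_def field_simps power2_eq_square)
  have "(1 - c - \<omega>^2 * d * h) * Ys = A + \<omega> * (1 - \<omega>) * h * F"
    using D by (simp add: Ys_def)
  then have Y_steady: "Ys = A + c * Ys + \<omega> * h * Ps"
    by (simp add: P_steady algebra_simps power2_eq_square)
  note DG = G_map_has_derivative[OF gI gP P_steady, of A c \<gamma> h \<sigma> \<mu> b \<beta>, folded E_def]
  have "(\<lambda>n. (G_jacobian c \<gamma> \<omega> h d E ^^ n) v) \<longlonglongrightarrow> 0" for v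
    using c1 c2 c3 c4 assms(11,12) D
    by (intro G_jacobian_orbits_tendsto_zero) (simp_all add: E_def Let_def)
  then obtain N where "N > 0" and "\<And>v. norm ((G_jacobian c \<gamma> \<omega> h d E ^^ N) v) \<le> norm v / 2"
    using linear_iterates_eventually_contract has_derivative_linear[OF DG] by blast
  then have "loc_asymp_stable (G_map gI gP A c \<gamma> \<omega> h d \<sigma> \<mu> F b \<beta>) (Ys, Ps, Ys)"
    using loc_asymp_stable_if_linearization_contracts[OF G_map_fixed_point DG]
      \<open>gI 0 = 0\<close> \<open>gP 0 = 0\<close> P_steady Y_steady by blast
  then show ?thesis by (simp add: Ys_def Ps_def)
qed

end
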